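(* Let $\mathbf{F}$ be a finite field with $q$ elements, let $n=r_1+\dots+r_s$ with $r_1,\dots,r_s>0$, and let $A=\operatorname{diag}(J_{r_1}(0),\dots,J_{r_s}(0))\in M_n(\mathbf{F})$. Consider the $q^n$ matrices obtained from $A$ by replacing its last column by an arbitrary column vector in $\mathbf{F}^n$. Then: (a) the number of nilpotent matrices among them equals the number of non-nilpotent semi-idempotent matrices among them, and both numbers equal $q^{n-r_s}$; (b) if $r_s>1$, then the number of nilpotent matrices among them of rank equal to $\operatorname{rank} A$ equals the number of non-nilpotent semi-idempotent matrices among them of rank equal to $\operatorname{rank} A$, and both numbers equal $q^{n-r_s-(s-1)}$.
   Context: $J_\ell(0)$ is the lower $\ell\times\ell$ Jordan block with eigenvalue $0$: entries $1$ directly below the diagonal and $0$ elsewhere. A square matrix $B$ is semi-idempotent if $\mathbf{F}^n=X\oplus Y$ with $X,Y$ $B$-stable, $B|_X$ the identity and $B|_Y$ nilpotent. *)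

theory Defs
  imports "Jordan_Normal_Form.Jordan_Normal_Form" "Jordan_Normal_Form.DL_Rank"
begin

definition lower_jordan_zero :: "nat \<Rightarrow> 'a::field mat" where
  "lower_jordan_zero l = mat l l (\<lambda>(i,j). if i = Suc j then 1 else 0)"

definition jordan_nilp_diag :: "nat list \<Rightarrow> 'a::field mat" where
  "jordan_nilp_diag rs = diag_block_mat (map lower_jordan_zero rs)"

definition replace_last_col :: "'a mat \<Rightarrow> 'a vec \<Rightarrow> 'a mat" where
  "replace_last_col A v =
     mat (dim_row A) (dim_col A) (\<lambda>(i,j). if j = dim_col A - 1 then v $ i else A $$ (i,j))"

definition nilpotent_mat :: "'a::field mat \<Rightarrow> bool" where
  "nilpotent_mat B \<longleftrightarrow> (\<exists>k. B ^\<^sub>m k = 0\<^sub>m (dim_row B) (dim_col B))"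

definition is_subspace_vec :: "nat \<Rightarrow> 'a::field vec set \<Rightarrow> bool" where
  "is_subspace_vec n X \<longleftrightarrow> X \<subseteq> carrier_vec n \<and> 0\<^sub>v n \<in> X \<and>
     (\<forall>x\<in>X. \<forall>y\<in>X. x + y \<in> X) \<and> (\<forall>c. \<forall>x\<in>X. c \<cdot>\<^sub>v x \<in> X)"

definition semi_idempotent :: "nat \<Rightarrow> 'a::field mat \<Rightarrow> bool" where
  "semi_idempotent n B \<longleftrightarrow> B \<in> carrier_mat n n \<and>
     (\<exists>X Y. is_subspace_vec n X \<and> is_subspace_vec n Y \<and>
        X \<inter> Y = {0\<^sub>v n} \<and> (\<forall>v\<in>carrier_vec n. \<exists>x\<in>X. \<exists>y\<in>Y. v = x + y) \<and>
        (\<forall>x\<in>X. B *\<^sub>v x \<in> X) \<and> (\<forall>y\<in>Y. B *\<^sub>v y \<in> Y) \<and>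
        (\<forall>x\<in>X. B *\<^sub>v x = x) \<and>
        (\<exists>k. \<forall>y\<in>Y. (B ^\<^sub>m k) *\<^sub>v y = 0\<^sub>v n))"

end

theory Submission
  imports Defs
begin

text \<open>Write \<open>B\<close> for \<open>A\<close> with \<open>v\<close> as last column and \<open>p = n - r\<^sub>s\<close> for the start of the last
  block. \<open>B\<close> maps the span of \<open>e\<^sub>0, \<dots>, e\<^sub>p\<^sub>-\<^sub>1\<close> into itself and is nilpotent there, while
  modulo this span it acts on the last block as the companion matrix of
  \<open>x ^ r\<^sub>s - (v\<^sub>n\<^sub>-\<^sub>1 x ^ (r\<^sub>s - 1) + \<dots> + v\<^sub>p)\<close>. So \<open>B\<close> is nilpotent iff \<open>v\<close> vanishes on
  the last block, and semi-idempotent but not nilpotent iff \<open>v\<close> agrees with \<open>e\<^sub>n\<^sub>-\<^sub>1\<close> there (the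
  companion matrix of \<open>x ^ (r\<^sub>s - 1) (x - 1)\<close>); either way exactly \<open>r\<^sub>s\<close> entries of \<open>v\<close> are
  prescribed. The other columns of \<open>B\<close> are zero or distinct unit vectors \<open>e\<^sub>i\<close> with \<open>i\<close> not a
  block start, so \<open>rank B = rank A\<close> iff \<open>v\<close> also vanishes at the \<open>s\<close> block starts; only \<open>s - 1\<close>
  of them lie outside the last block, and none of them is \<open>n - 1\<close> when \<open>r\<^sub>s > 1\<close>.\<close>

lemma eq_mat_iff_mult_vec_eq:
  fixes A B :: "'a::semiring_1 mat"
  assumes "A \<in> carrier_mat n m" and "B \<in> carrier_mat n m"
  shows "A = B \<longleftrightarrow> (\<forall>x\<in>carrier_vec m. A *\<^sub>v x = B *\<^sub>v x)"
proof (intro iffI ballI)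
  assume eq: "\<forall>x\<in>carrier_vec m. A *\<^sub>v x = B *\<^sub>v x"
  show "A = B"
  proof (rule eq_matI)
    fix i j assume "i < dim_row B" "j < dim_col B"
    then have "(A *\<^sub>v unit_vec m j) $ i = (B *\<^sub>v unit_vec m j) $ i"
      using eq by simp
    then show "A $$ (i, j) = B $$ (i, j)"
      using assms \<open>i < dim_row B\<close> \<open>j < dim_col B\<close> by simp
  qed (use assms in auto)
qed simp

lemma pow_mat_Suc_left:
  assumes "A \<in> carrier_mat n n"
  shows "A ^\<^sub>m Suc k = A * A ^\<^sub>m k"
proof (induction k)
  case (Suc k)
  have "A ^\<^sub>m Suc (Suc k) = (A * A ^\<^sub>m k) * A"
    using Suc by simp
  also have "\<dots> = A * A ^\<^sub>m Suc k"
    using assms by (simp add: assoc_mult_mat[of _ n n _ n _ n])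
  finally show ?case .
qed (use assms in simp)

lemma pow_mat_add:
  assumes "A \<in> carrier_mat n n"
  shows "A ^\<^sub>m (a + b) = A ^\<^sub>m a * A ^\<^sub>m b"
proof (induction b)
  case (Suc b)
  then show ?case
    using assms by (simp add: assoc_mult_mat[of _ n n _ n _ n])
qed (use assms in simp)

lemma mult_mat_vec_zero [simp]: "A \<in> carrier_mat n m \<Longrightarrow> A *\<^sub>v 0\<^sub>v m = 0\<^sub>v n"
  by (intro eq_vecI) auto

lemma zero_mat_mult_vec [simp]:
  "x \<in> carrier_vec m \<Longrightarrow> (0\<^sub>m n m :: 'a::semiring_0 mat) *\<^sub>v x = 0\<^sub>v n"
  by (intro eq_vecI) auto

lemma eq_if_minus_vec_eq_zero:
  fixes x y :: "'a::group_add vec"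
  assumes "x \<in> carrier_vec n" and "y \<in> carrier_vec n" and "x - y = 0\<^sub>v n"
  shows "x = y"
proof (rule eq_vecI)
  fix i assume "i < dim_vec y"
  then show "x $ i = y $ i"
    using arg_cong[OF assms(3), of "\<lambda>u. u $ i"] assms(1,2) by simp
qed (use assms in simp)

lemma pow_mat_mult_vec_carrier [simp]:
  "A \<in> carrier_mat n n \<Longrightarrow> x \<in> carrier_vec n \<Longrightarrow> A ^\<^sub>m k *\<^sub>v x \<in> carrier_vec n"
  by (metis mult_mat_vec_carrier pow_carrier_mat)

lemma pow_mat_Suc_mult_vec:
  assumes "A \<in> carrier_mat n n" and "x \<in> carrier_vec n"
  shows "A ^\<^sub>m Suc k *\<^sub>v x = A *\<^sub>v (A ^\<^sub>m k *\<^sub>v x)"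
  unfolding pow_mat_Suc_left[OF assms(1)]
  using assoc_mult_mat_vec[OF assms(1) pow_carrier_mat[OF assms(1)] assms(2)] .

lemma pow_mat_add_mult_vec:
  assumes "A \<in> carrier_mat n n" and "x \<in> carrier_vec n"
  shows "A ^\<^sub>m (a + b) *\<^sub>v x = A ^\<^sub>m a *\<^sub>v (A ^\<^sub>m b *\<^sub>v x)"
  unfolding pow_mat_add[OF assms(1)]
  using assoc_mult_mat_vec[OF pow_carrier_mat[OF assms(1)] pow_carrier_mat[OF assms(1)] assms(2)] .

lemma pow_mat_mult_vec_fixed:
  assumes "A \<in> carrier_mat n n" and "x \<in> carrier_vec n" and "A *\<^sub>v x = x"
  shows "A ^\<^sub>m k *\<^sub>v x = x"
proof (induction k)
  case (Suc k)
  then show ?case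
    using pow_mat_Suc_mult_vec[OF assms(1,2), of k] assms(3) by simp
qed (use assms in simp)

section \<open>Nilpotent and semi-idempotent matrices\<close>

lemma nilpotent_mat_iff_mult_vec:
  assumes "A \<in> carrier_mat n n"
  shows "nilpotent_mat A \<longleftrightarrow> (\<exists>k. \<forall>x\<in>carrier_vec n. A ^\<^sub>m k *\<^sub>v x = 0\<^sub>v n)"
  using assms
  by (simp add: nilpotent_mat_def eq_mat_iff_mult_vec_eq[of _ n n "0\<^sub>m n n"])

lemma pow_Suc_eq_if_semi_idempotent:
  assumes "semi_idempotent n A"
  shows "\<exists>k. A ^\<^sub>m Suc k = A ^\<^sub>m k"
proof -
  obtain X Y k where X: "is_subspace_vec n X" and Y: "is_subspace_vec n Y"
    and sum: "\<forall>w\<in>carrier_vec n. \<exists>x\<in>X. \<exists>y\<in>Y. w = x + y"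
    and A_Y: "\<forall>y\<in>Y. A *\<^sub>v y \<in> Y" and A_X: "\<forall>x\<in>X. A *\<^sub>v x = x"
    and nil_Y: "\<forall>y\<in>Y. A ^\<^sub>m k *\<^sub>v y = 0\<^sub>v n"
    using assms unfolding semi_idempotent_def by blast
  have A: "A \<in> carrier_mat n n"
    using assms unfolding semi_idempotent_def by blast
  have "A ^\<^sub>m Suc k *\<^sub>v w = A ^\<^sub>m k *\<^sub>v w" if w: "w \<in> carrier_vec n" for w
  proof -
    obtain x y where xy: "x \<in> X" "y \<in> Y" "w = x + y"
      using sum w by blast
    have x: "x \<in> carrier_vec n" and y: "y \<in> carrier_vec n"
      using xy X Y unfolding is_subspace_vec_def by auto
    have fixed: "A ^\<^sub>m j *\<^sub>v x = x" for j
      using pow_mat_mult_vec_fixed[OF A x] A_X xy(1) by blast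
    have "A ^\<^sub>m Suc k *\<^sub>v y = A ^\<^sub>m k *\<^sub>v (A *\<^sub>v y)"
      using assoc_mult_mat_vec[OF pow_carrier_mat[OF A] A y] by simp
    then have y_stable: "A ^\<^sub>m Suc k *\<^sub>v y = A ^\<^sub>m k *\<^sub>v y"
      using nil_Y A_Y xy(2) by simp
    have "A ^\<^sub>m j *\<^sub>v w = x + A ^\<^sub>m j *\<^sub>v y" for j
      unfolding xy(3) using mult_add_distrib_mat_vec[OF pow_carrier_mat[OF A] x y] fixed by simp
    then show ?thesis
      using y_stable by metis
  qed
  then have "A ^\<^sub>m Suc k = A ^\<^sub>m k"
    using eq_mat_iff_mult_vec_eq[OF pow_carrier_mat[OF A] pow_carrier_mat[OF A]] by blast
  then show ?thesis ..
qed

text \<open>The fixed space \<open>X\<close> of \<open>A\<close> contains the range of \<open>A ^\<^sub>m k\<close>, so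
  \<open>w = A ^\<^sub>m k *\<^sub>v w + (w - A ^\<^sub>m k *\<^sub>v w)\<close> splits along \<open>X\<close> and the kernel \<open>Y\<close> of \<open>A ^\<^sub>m k\<close>.\<close>
lemma semi_idempotent_if_pow_Suc_eq:
  assumes A: "A \<in> carrier_mat n n" and k: "A ^\<^sub>m Suc k = A ^\<^sub>m k"
  shows "semi_idempotent n A"
proof -
  have stable: "A ^\<^sub>m (k + j) = A ^\<^sub>m k" for j
    by (induction j) (use k in simp_all)
  have A_Ak: "A *\<^sub>v (A ^\<^sub>m k *\<^sub>v w) = A ^\<^sub>m k *\<^sub>v w" if "w \<in> carrier_vec n" for w
    using pow_mat_Suc_mult_vec[OF A that, of k] k by simp
  define X where "X = {x\<in>carrier_vec n. A *\<^sub>v x = x}"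
  define Y where "Y = {y\<in>carrier_vec n. A ^\<^sub>m k *\<^sub>v y = 0\<^sub>v n}"
  have "is_subspace_vec n X"
    unfolding is_subspace_vec_def X_def
    using A by (auto simp: mult_add_distrib_mat_vec[of _ n n] mult_mat_vec)
  moreover have "is_subspace_vec n Y"
    unfolding is_subspace_vec_def Y_def using A
    by (auto simp: mult_add_distrib_mat_vec[of _ n n] mult_mat_vec[of _ n n])
  moreover have "X \<inter> Y = {0\<^sub>v n}"
    using A pow_mat_mult_vec_fixed[OF A] by (auto simp: X_def Y_def)
  moreover have "\<exists>x\<in>X. \<exists>y\<in>Y. w = x + y" if w: "w \<in> carrier_vec n" for w
  proof (intro bexI)
    let ?x = "A ^\<^sub>m k *\<^sub>v w"
    have x: "?x \<in> carrier_vec n"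
      using A w by simp
    show "?x \<in> X"
      using x A_Ak[OF w] by (simp add: X_def)
    have "A ^\<^sub>m k *\<^sub>v ?x = ?x"
      using pow_mat_add_mult_vec[OF A w, of k k] stable[of k] by simp
    then show "w - ?x \<in> Y"
      using A w x by (simp add: Y_def mult_minus_distrib_mat_vec[of _ n n])
    show "w = ?x + (w - ?x)"
      using A w x by (intro eq_vecI) auto
  qed
  moreover have "A *\<^sub>v y \<in> Y" if y: "y \<in> Y" for y
  proof -
    have "A ^\<^sub>m k *\<^sub>v (A *\<^sub>v y) = A ^\<^sub>m Suc k *\<^sub>v y"
      using assoc_mult_mat_vec[OF pow_carrier_mat[OF A] A, of y] y by (simp add: Y_def)
    then show ?thesis
      using A k y by (simp add: Y_def)
  qed
  moreover have "\<forall>x\<in>X. A *\<^sub>v x \<in> X" and "\<forall>x\<in>X. A *\<^sub>v x = x"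
    and "\<forall>y\<in>Y. A ^\<^sub>m k *\<^sub>v y = 0\<^sub>v n"
    by (simp_all add: X_def Y_def)
  ultimately show ?thesis
    unfolding semi_idempotent_def using A by (intro conjI exI[of _ X] exI[of _ Y]) auto
qed

lemma semi_idempotent_iff_pow_Suc_eq:
  assumes "A \<in> carrier_mat n n"
  shows "semi_idempotent n A \<longleftrightarrow> (\<exists>k. A ^\<^sub>m Suc k = A ^\<^sub>m k)"
  using assms pow_Suc_eq_if_semi_idempotent semi_idempotent_if_pow_Suc_eq by blast

section \<open>Counting last columns\<close>

text \<open>No finiteness of \<open>'a\<close> is needed: for infinite \<open>'a\<close> both sides are \<open>0\<close>, unless
  \<open>K = {..<n}\<close>, where both are \<open>1\<close>.\<close>
lemma card_vecs_fixed_on: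
  fixes g :: "nat \<Rightarrow> 'a"
  assumes K: "K \<subseteq> {..<n}"
  shows "card {x \<in> carrier_vec n. \<forall>i\<in>K. x $ i = g i} = card (UNIV :: 'a set) ^ (n - card K)"
proof -
  define D where "D = {..<n} - K"
  define extend :: "(nat \<Rightarrow> 'a) \<Rightarrow> 'a vec" where
    "extend h = vec n (\<lambda>i. if i \<in> K then g i else h i)" for h
  have "inj_on extend (D \<rightarrow>\<^sub>E UNIV)"
  proof (rule inj_onI, rule ext)
    fix h h' i assume h: "h \<in> D \<rightarrow>\<^sub>E UNIV" "h' \<in> D \<rightarrow>\<^sub>E UNIV" and eq: "extend h = extend h'"
    show "h i = h' i"
    proof (cases "i \<in> D")
      case True
      then show ?thesis
        using arg_cong[OF eq, of "\<lambda>x. x $ i"] by (auto simp: extend_def D_def)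
    next
      case False
      then show ?thesis
        using PiE_arb[OF h(1) False] PiE_arb[OF h(2) False] by simp
    qed
  qed
  then have "card (extend ` (D \<rightarrow>\<^sub>E UNIV)) = card (UNIV :: 'a set) ^ card D"
    by (simp add: card_image card_PiE D_def)
  moreover have "extend ` (D \<rightarrow>\<^sub>E UNIV) = {x \<in> carrier_vec n. \<forall>i\<in>K. x $ i = g i}"
  proof (intro equalityI subsetI)
    fix x assume "x \<in> {x \<in> carrier_vec n. \<forall>i\<in>K. x $ i = g i}"
    then have "x = extend (restrict (\<lambda>i. x $ i) D)" and "restrict (\<lambda>i. x $ i) D \<in> D \<rightarrow>\<^sub>E UNIV"
      by (auto simp: extend_def D_def intro!: eq_vecI)
    then show "x \<in> extend ` (D \<rightarrow>\<^sub>E UNIV)"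
      by blast
  qed (use K in \<open>auto simp: extend_def\<close>)
  moreover have "card D = n - card K"
    using card_Diff_subset[OF finite_subset[OF K finite_lessThan] K] by (simp add: D_def)
  ultimately show ?thesis
    by simp
qed

lemma inj_on_replace_last_col:
  assumes "A \<in> carrier_mat n n" and "0 < n"
  shows "inj_on (replace_last_col A) (carrier_vec n)"
proof (rule inj_onI, rule eq_vecI)
  fix v w i
  assume "w \<in> carrier_vec n" and eq: "replace_last_col A v = replace_last_col A w"
    and "i < dim_vec w"
  have "replace_last_col A v $$ (i, n - 1) = replace_last_col A w $$ (i, n - 1)"
    using eq by simp
  then show "v $ i = w $ i"
    using assms \<open>w \<in> carrier_vec n\<close> \<open>i < dim_vec w\<close> by (simp add: replace_last_col_def)
qed auto

lemma card_replace_last_col_filter: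
  fixes A :: "'a mat"
  assumes "A \<in> carrier_mat n n" and "0 < n" and "K \<subseteq> {..<n}"
    and "\<And>v. v \<in> carrier_vec n \<Longrightarrow> P (replace_last_col A v) \<longleftrightarrow> (\<forall>i\<in>K. v $ i = g i)"
  shows "card {B \<in> replace_last_col A ` carrier_vec n. P B} = card (UNIV :: 'a set) ^ (n - card K)"
proof -
  have "{B \<in> replace_last_col A ` carrier_vec n. P B}
      = replace_last_col A ` {v \<in> carrier_vec n. \<forall>i\<in>K. v $ i = g i}"
    using assms(4) by auto
  moreover have "inj_on (replace_last_col A) {v \<in> carrier_vec n. \<forall>i\<in>K. v $ i = g i}"
    using inj_on_replace_last_col[OF assms(1,2)] by (rule inj_on_subset) auto
  ultimately show ?thesis
    using card_vecs_fixed_on[OF assms(3)] by (simp add: card_image)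
qed

fun block_starts :: "nat list \<Rightarrow> nat set" where
  "block_starts [] = {}"
| "block_starts (r # rs) = insert 0 ((+) r ` block_starts rs)"

lemma finite_block_starts [simp]: "finite (block_starts rs)"
  by (induction rs) auto

lemma block_start_less_sum_list:
  "\<forall>r\<in>set rs. 0 < r \<Longrightarrow> i \<in> block_starts rs \<Longrightarrow> i < sum_list rs"
  by (induction rs arbitrary: i) auto

lemma zero_in_block_starts: "rs \<noteq> [] \<Longrightarrow> 0 \<in> block_starts rs"
  by (cases rs) auto

lemma last_block_start_in: "rs \<noteq> [] \<Longrightarrow> sum_list rs - last rs \<in> block_starts rs"
proof (induction rs)
  case (Cons r rs)
  show ?case
  proof (cases "rs = []")
    case False
    then have "sum_list (r # rs) - last (r # rs) = r + (sum_list rs - last rs)"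
      by (simp add: member_le_sum_list)
    then show ?thesis
      using Cons False by simp
  qed simp
qed simp

lemma block_start_le_last: "i \<in> block_starts rs \<Longrightarrow> i \<le> sum_list rs - last rs"
proof (induction rs arbitrary: i)
  case (Cons r rs)
  show ?case
  proof (cases "rs = []")
    case False
    have "last rs \<le> sum_list rs"
      using False by (intro member_le_sum_list last_in_set) auto
    then have "r + x \<le> sum_list (r # rs) - last (r # rs)" if "x \<in> block_starts rs" for x
      using Cons.IH[OF that] False by simp
    then show ?thesis
      using Cons.prems by auto
  qed (use Cons in simp)
qed simp

lemma card_block_starts: "\<forall>r\<in>set rs. 0 < r \<Longrightarrow> card (block_starts rs) = length rs"
proof (induction rs)
  case (Cons r rs)
  then have "0 \<notin> (+) r ` block_starts rs"
    by auto
  then show ?case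
    using Cons by (simp add: card_image)
qed simp

lemma jordan_nilp_diag_carrier: "jordan_nilp_diag rs \<in> carrier_mat (sum_list rs) (sum_list rs)"
  unfolding jordan_nilp_diag_def carrier_mat_def dim_diag_block_mat
  by (induction rs) (auto simp: lower_jordan_zero_def)

lemma index_jordan_nilp_diag:
  assumes "\<forall>r\<in>set rs. 0 < r" and "i < sum_list rs" and "j < sum_list rs"
  shows "(jordan_nilp_diag rs :: 'a::field mat) $$ (i, j)
    = (if i = Suc j \<and> i \<notin> block_starts rs then 1 else 0)"
  using assms
proof (induction rs arbitrary: i j)
  case (Cons r rs)
  let ?D = "jordan_nilp_diag rs :: 'a mat"
  have D: "?D \<in> carrier_mat (sum_list rs) (sum_list rs)"
    by (rule jordan_nilp_diag_carrier)
  have split: "(jordan_nilp_diag (r # rs) :: 'a mat)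
      = four_block_mat (lower_jordan_zero r) (0\<^sub>m r (sum_list rs)) (0\<^sub>m (sum_list rs) r) ?D"
    using D unfolding jordan_nilp_diag_def by (simp add: Let_def lower_jordan_zero_def)
  have r: "0 < r"
    using Cons.prems by simp
  consider "i < r" | "r \<le> i" "j < r" | "r \<le> i" "r \<le> j"
    by linarith
  then show ?case
  proof cases
    case 1
    then show ?thesis
      using Cons.prems r D unfolding split by (auto simp: lower_jordan_zero_def)
  next
    case 2
    then have "rs \<noteq> []"
      using Cons.prems by auto
    have "\<not> (i = Suc j \<and> i \<notin> block_starts (r # rs))"
    proof
      assume "i = Suc j \<and> i \<notin> block_starts (r # rs)"
      moreover have "0 \<in> block_starts rs"
        using zero_in_block_starts \<open>rs \<noteq> []\<close> .
      ultimately show False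
        using 2 by (auto simp: image_iff)
    qed
    then show ?thesis
      using 2 Cons.prems D unfolding split by (subst if_not_P) (auto simp: lower_jordan_zero_def)
  next
    case 3
    have "i \<in> block_starts (r # rs) \<longleftrightarrow> i - r \<in> block_starts rs"
      using 3 r by (auto simp: image_iff) (metis add_diff_inverse_nat not_le)
    then show ?thesis
      using Cons 3 D unfolding split by (auto simp: lower_jordan_zero_def Suc_diff_le)
  qed
qed simp

lemma (in vec_space) in_span_unit_vecs_iff:
  assumes I: "I \<subseteq> {..<n}" and w: "w \<in> carrier_vec n"
  shows "w \<in> span (unit_vec n ` I) \<longleftrightarrow> (\<forall>i<n. i \<notin> I \<longrightarrow> w $ i = 0)"
proof
  assume "w \<in> span (unit_vec n ` I)"
  then obtain a U where w_eq: "w = lincomb a U" and U: "finite U" "U \<subseteq> unit_vec n ` I"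
    using in_spanE by blast
  have U_carrier: "U \<subseteq> carrier_vec n"
    using U by auto
  show "\<forall>i<n. i \<notin> I \<longrightarrow> w $ i = 0"
  proof (intro allI impI)
    fix i assume i: "i < n" "i \<notin> I"
    have "w $ i = (\<Sum>u\<in>U. a u * u $ i)"
      using lincomb_index[OF i(1) U_carrier] w_eq by simp
    also have "\<dots> = 0"
    proof (intro sum.neutral ballI)
      fix u assume "u \<in> U"
      then obtain j where "j \<in> I" "u = unit_vec n j"
        using U(2) by auto
      moreover have "j \<noteq> i" "j < n"
        using \<open>j \<in> I\<close> i I by auto
      ultimately show "a u * u $ i = 0"
        using i by simp
    qed
    finally show "w $ i = 0" .
  qed
next
  assume outside: "\<forall>i<n. i \<notin> I \<longrightarrow> w $ i = 0"
  let ?U = "unit_vec n ` I"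
  have finI: "finite I"
    using finite_subset[OF I] by simp
  then have fin: "finite ?U"
    by simp
  have U_carrier: "?U \<subseteq> carrier_vec n"
    by auto
  have inj: "inj_on (unit_vec n :: nat \<Rightarrow> 'a vec) I"
    using I by (intro inj_onI) (metis lessThan_iff subsetD unit_vec_eq)
  have "w = lincomb (\<lambda>u. u \<bullet> w) ?U"
  proof (rule eq_vecI)
    fix i assume "i < dim_vec (lincomb (\<lambda>u. u \<bullet> w) ?U)"
    then have i: "i < n"
      using lincomb_dim[OF fin U_carrier] by simp
    have "lincomb (\<lambda>u. u \<bullet> w) ?U $ i = (\<Sum>u\<in>?U. (u \<bullet> w) * u $ i)"
      using lincomb_index[OF i U_carrier] .
    also have "\<dots> = (\<Sum>j\<in>I. (unit_vec n j \<bullet> w) * unit_vec n j $ i)"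
      by (simp add: sum.reindex[OF inj])
    also have "\<dots> = (\<Sum>j\<in>I. if j = i then w $ i else 0)"
      using I i w by (intro sum.cong) auto
    also have "\<dots> = w $ i"
      using outside i finI by (cases "i \<in> I") simp_all
    finally show "w $ i = lincomb (\<lambda>u. u \<bullet> w) ?U $ i" ..
  qed (use w lincomb_dim[OF fin U_carrier] in simp)
  then show "w \<in> span ?U"
    using fin by (intro in_spanI) auto
qed

lemma (in vec_space) rank_cols_indpt_insert:
  assumes M: "M \<in> carrier_mat n nc" and E: "E \<subseteq> set (cols M)" "lin_indpt E"
    and w: "w \<in> set (cols M)" and cols: "set (cols M) \<subseteq> insert (0\<^sub>v n) (insert w E)"
  shows "rank M = card E + (if w \<in> span E then 0 else 1)"
proof -
  let ?indpt = "\<lambda>T. T \<subseteq> set (cols M) \<and> lin_indpt T"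
  define F where "F = (if w \<in> span E then E else insert w E)"
  have cols_carrier: "set (cols M) \<subseteq> carrier_vec n"
    using M cols_dim by blast
  then have E_carrier: "E \<subseteq> carrier_vec n" and w_carrier: "w \<in> carrier_vec n"
    using E w by auto
  have finE: "finite E"
    using E(1) finite_subset by blast
  have nontrivial: "carrier (class_ring :: 'a ring) \<noteq> {\<zero>\<^bsub>class_ring\<^esub>}"
    by (simp add: class_ring_simps) (metis UNIV_I singletonD zero_neq_one)
  have w_notin_E: "w \<notin> E" if "w \<notin> span E"
    using that in_own_span[OF E_carrier] by blast
  have "?indpt F"
  proof (cases "w \<in> span E")
    case False
    then show ?thesis
      using w_notin_E E w lin_dep_iff_in_span[OF E_carrier E(2) w_carrier] by (simp add: F_def)
  qed (use E in \<open>simp add: F_def\<close>)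
  moreover have "T = F" if "F \<subseteq> T" "?indpt T" for T
  proof -
    have "0\<^sub>v n \<notin> T"
      using zero_nin_lin_indpt[of T] that cols_carrier nontrivial by auto
    then have "T \<subseteq> insert w E"
      using that cols by auto
    moreover have "w \<notin> T" if "w \<in> span E" "w \<notin> E"
    proof
      assume "w \<in> T"
      then have "E \<union> {w} \<subseteq> T"
        using \<open>F \<subseteq> T\<close> \<open>w \<in> span E\<close> by (auto simp: F_def)
      moreover have "lin_dep (E \<union> {w})"
        using lin_dep_iff_in_span[OF E_carrier E(2) w_carrier] that by simp
      ultimately show False
        using supset_ld_is_ld \<open>?indpt T\<close> by blast
    qed
    ultimately show "T = F"
      using \<open>F \<subseteq> T\<close> by (auto simp: F_def split: if_splits)
  qed
  ultimately have "maximal F ?indpt"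
    unfolding maximal_def by blast
  then have "rank M = card F"
    by (rule rank_card_indpt[OF M])
  then show ?thesis
    using finE w_notin_E by (simp add: F_def)
qed

lemma (in vec_space) rank_unit_vec_cols:
  assumes M: "M \<in> carrier_mat n nc" and I: "I \<subseteq> {..<n}"
    and units: "unit_vec n ` I \<subseteq> set (cols M)" and w: "w \<in> set (cols M)"
    and cols: "set (cols M) \<subseteq> insert (0\<^sub>v n) (insert w (unit_vec n ` I))"
  shows "rank M = card I + (if \<forall>i<n. i \<notin> I \<longrightarrow> w $ i = 0 then 0 else 1)"
proof -
  have "unit_vec n ` I \<subseteq> set (unit_vecs n)"
    using I unfolding unit_vecs_def by auto
  then have "lin_indpt (unit_vec n ` I)"
    using unit_vecs_basis subset_li_is_li unfolding basis_def by blast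
  moreover have "w \<in> carrier_vec n"
    using w M cols_dim by blast
  moreover have "card (unit_vec n ` I) = card I"
    using I by (intro card_image inj_onI) (metis lessThan_iff subsetD unit_vec_eq)
  ultimately show ?thesis
    using rank_cols_indpt_insert[OF M units _ w cols] in_span_unit_vecs_iff[OF I] by simp
qed

section \<open>Shift matrices with a replaced last column\<close>

text \<open>\<open>S\<close> is the set of block starts and \<open>p\<close> the start of the last block; the tail of a vector
  consists of its entries in the last block \<open>{p..<n}\<close>.\<close>
locale block_shift =
  fixes n p :: nat and S :: "nat set" and A :: "'a::field mat"
  assumes A_carrier: "A \<in> carrier_mat n n"
    and index_A: "\<And>i j. i < n \<Longrightarrow> j < n \<Longrightarrow> A $$ (i, j) = (if i = Suc j \<and> i \<notin> S then 1 else 0)"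
    and starts_subset: "S \<subseteq> {..<n}"
    and zero_in_starts: "0 \<in> S"
    and last_start_in: "p \<in> S"
    and start_le_last: "\<And>i. i \<in> S \<Longrightarrow> i \<le> p"
begin

lemma p_less_n: "p < n"
  using last_start_in starts_subset by auto

definition tail_eq :: "'a vec \<Rightarrow> 'a vec \<Rightarrow> bool" where
  "tail_eq x y \<longleftrightarrow> (\<forall>i\<in>{p..<n}. x $ i = y $ i)"

definition tail_sum :: "'a vec \<Rightarrow> 'a" where
  "tail_sum x = (\<Sum>i\<in>{p..<n}. x $ i)"

lemma replace_last_col_zero: "replace_last_col A (0\<^sub>v n) = A"
  using A_carrier index_A by (intro eq_matI) (auto simp: replace_last_col_def)

end

locale block_shift_last_col = block_shift n p S A
  for n p :: nat and S :: "nat set" and A :: "'a::field mat" +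
  fixes v :: "'a vec"
  assumes v_carrier: "v \<in> carrier_vec n"
begin

definition B :: "'a mat" where
  "B = replace_last_col A v"

lemma B_carrier: "B \<in> carrier_mat n n"
  using A_carrier by (simp add: B_def replace_last_col_def)

lemma index_B: "i < n \<Longrightarrow> j < n \<Longrightarrow>
    B $$ (i, j) = (if j = n - 1 then v $ i else if i = Suc j \<and> i \<notin> S then 1 else 0)"
  using A_carrier index_A by (simp add: B_def replace_last_col_def)

lemma index_B_mult_vec:
  assumes x: "x \<in> carrier_vec n" and i: "i < n"
  shows "(B *\<^sub>v x) $ i = (if i \<in> S then 0 else x $ (i - 1)) + v $ i * x $ (n - 1)"
proof -
  have i_pos: "0 < i" if "i \<notin> S"
    using that zero_in_starts by (metis gr0I)
  have "(B *\<^sub>v x) $ i = (\<Sum>j\<in>insert (n - 1) {0..<n - 1}. B $$ (i, j) * x $ j)"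
    using B_carrier x i p_less_n by (simp add: scalar_prod_def atLeast0LessThan lessThan_Suc[symmetric])
  also have "\<dots> = v $ i * x $ (n - 1) + (\<Sum>j\<in>{0..<n - 1}. B $$ (i, j) * x $ j)"
    using i by (simp add: index_B)
  also have "(\<Sum>j\<in>{0..<n - 1}. B $$ (i, j) * x $ j)
      = (\<Sum>j\<in>{0..<n - 1}. if j = i - 1 then (if i \<in> S then 0 else x $ j) else 0)"
    using i i_pos by (intro sum.cong) (auto simp: index_B)
  also have "\<dots> = (if i \<in> S then 0 else x $ (i - 1))"
    using i i_pos by (auto simp: sum.delta)
  finally show ?thesis
    by simp
qed

lemma tail_eq_B_mult_vec:
  assumes x: "x \<in> carrier_vec n" and y: "y \<in> carrier_vec n" and eq: "tail_eq x y"
  shows "tail_eq (B *\<^sub>v x) (B *\<^sub>v y)"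
  unfolding tail_eq_def
proof
  fix i assume i: "i \<in> {p..<n}"
  have "x $ (n - 1) = y $ (n - 1)"
    using eq p_less_n unfolding tail_eq_def by auto
  moreover have "x $ (i - 1) = y $ (i - 1)" if "i \<notin> S"
  proof -
    have "p < i"
      using i that last_start_in by (cases "i = p") auto
    then have "i - 1 \<in> {p..<n}"
      using i by auto
    then show ?thesis
      using eq unfolding tail_eq_def by blast
  qed
  ultimately show "(B *\<^sub>v x) $ i = (B *\<^sub>v y) $ i"
    using i index_B_mult_vec[OF x] index_B_mult_vec[OF y] by auto
qed

lemma tail_zero_pow_mult_vec:
  assumes x: "x \<in> carrier_vec n" and "tail_eq x (0\<^sub>v n)"
  shows "tail_eq (B ^\<^sub>m k *\<^sub>v x) (0\<^sub>v n)"
proof (induction k)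
  case (Suc k)
  then have "tail_eq (B *\<^sub>v (B ^\<^sub>m k *\<^sub>v x)) (B *\<^sub>v 0\<^sub>v n)"
    using B_carrier x by (intro tail_eq_B_mult_vec) simp_all
  then show ?case
    unfolding pow_mat_Suc_mult_vec[OF B_carrier x] using B_carrier by simp
qed (use assms B_carrier in simp)

text \<open>The entries of \<open>B ^\<^sub>m k *\<^sub>v x\<close> vanish below index \<open>k\<close>: away from the last column,
  \<open>B\<close> shifts every entry one index further.\<close>
lemma pow_mult_vec_eq_zero_if_tail_zero:
  assumes x: "x \<in> carrier_vec n" and tail: "tail_eq x (0\<^sub>v n)"
  shows "B ^\<^sub>m n *\<^sub>v x = 0\<^sub>v n"
proof -
  have "\<forall>i<n. (B ^\<^sub>m k *\<^sub>v x) $ i \<noteq> 0 \<longrightarrow> k \<le> i" for k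
  proof (induction k)
    case (Suc k)
    show ?case
    proof (intro allI impI)
      fix i assume i: "i < n" and nonzero: "(B ^\<^sub>m Suc k *\<^sub>v x) $ i \<noteq> 0"
      let ?y = "B ^\<^sub>m k *\<^sub>v x"
      have "?y $ (n - 1) = 0"
        using tail_zero_pow_mult_vec[OF x tail, of k] p_less_n unfolding tail_eq_def by auto
      then have "(B ^\<^sub>m Suc k *\<^sub>v x) $ i = (if i \<in> S then 0 else ?y $ (i - 1))"
        using index_B_mult_vec[of ?y i] pow_mat_Suc_mult_vec[OF B_carrier x] B_carrier x i by simp
      then have "i \<notin> S" and "?y $ (i - 1) \<noteq> 0"
        using nonzero by (auto split: if_splits)
      moreover have "i \<noteq> 0"
        using \<open>i \<notin> S\<close> zero_in_starts by metis
      ultimately have "k \<le> i - 1"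
        using Suc.IH i by (metis less_imp_diff_less)
      then show "Suc k \<le> i"
        using \<open>i \<noteq> 0\<close> by simp
    qed
  qed simp
  then have "(B ^\<^sub>m n *\<^sub>v x) $ i = 0" if "i < n" for i
    using that by (metis not_le)
  then show ?thesis
    using B_carrier by (intro eq_vecI) auto
qed

text \<open>Zeros enter the tail at \<open>p\<close> and move down one step per application of \<open>B\<close>.\<close>
lemma index_pow_mult_vec_eq_zero:
  assumes "l \<le> n" and v_zero: "\<forall>i\<in>{p..<l}. v $ i = 0" and x: "x \<in> carrier_vec n"
  shows "p \<le> i \<Longrightarrow> i < l \<Longrightarrow> i < p + k \<Longrightarrow> (B ^\<^sub>m k *\<^sub>v x) $ i = 0"
proof (induction k arbitrary: i)
  case (Suc k)
  have "i < n" and "v $ i = 0"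
    using Suc.prems assms(1) v_zero by auto
  moreover have "(B ^\<^sub>m k *\<^sub>v x) $ (i - 1) = 0" if "i \<notin> S"
  proof -
    have "p < i"
      using Suc.prems that last_start_in by (cases "i = p") auto
    then show ?thesis
      using Suc.IH Suc.prems by simp
  qed
  ultimately show ?case
    using index_B_mult_vec[of "B ^\<^sub>m k *\<^sub>v x" i] pow_mat_Suc_mult_vec[OF B_carrier x] B_carrier x
    by auto
qed simp

lemma nilpotent_B_if_tail_v_zero:
  assumes "tail_eq v (0\<^sub>v n)"
  shows "nilpotent_mat B"
proof -
  have "B ^\<^sub>m (n + (n - p)) *\<^sub>v x = 0\<^sub>v n" if x: "x \<in> carrier_vec n" for x
  proof -
    have "tail_eq (B ^\<^sub>m (n - p) *\<^sub>v x) (0\<^sub>v n)"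
      using index_pow_mult_vec_eq_zero[of n x _ "n - p"] assms x unfolding tail_eq_def by auto
    then show ?thesis
      using pow_mult_vec_eq_zero_if_tail_zero pow_mat_add_mult_vec[OF B_carrier x] B_carrier x by simp
  qed
  then show ?thesis
    using nilpotent_mat_iff_mult_vec[OF B_carrier] by blast
qed

lemma first_nonzero_tail_entry:
  assumes "\<not> tail_eq v (0\<^sub>v n)"
  obtains m where "p \<le> m" "m < n" "v $ m \<noteq> 0" "\<forall>i\<in>{p..<m}. v $ i = 0"
proof -
  have "\<exists>m. m \<in> {p..<n} \<and> v $ m \<noteq> 0"
    using assms unfolding tail_eq_def by auto
  then obtain m where "m \<in> {p..<n} \<and> v $ m \<noteq> 0" "\<forall>i<m. \<not> (i \<in> {p..<n} \<and> v $ i \<noteq> 0)"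
    unfolding exists_least_iff[of "\<lambda>m. m \<in> {p..<n} \<and> v $ m \<noteq> 0"] by blast
  then show thesis
    using that by auto
qed

context
  fixes m :: nat
  assumes p_le_m: "p \<le> m" and m_less_n: "m < n" and v_m: "v $ m \<noteq> 0"
    and v_below_m: "\<forall>i\<in>{p..<m}. v $ i = 0"
begin

text \<open>Modulo the entries before \<open>p\<close>, \<open>B\<close> maps the vectors supported in \<open>{m..<n}\<close> to themselves
  like a companion matrix with nonzero constant coefficient \<open>v $ m\<close>, hence bijectively.\<close>
lemma tail_surj_B:
  assumes z: "z \<in> carrier_vec n" and z_low: "\<forall>i<m. z $ i = 0"
  obtains x where "x \<in> carrier_vec n" "\<forall>i<m. x $ i = 0" "tail_eq (B *\<^sub>v x) z"
proof -
  define c where "c = z $ m / v $ m"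
  define x where "x = vec n (\<lambda>j. if j < m then 0 else if j = n - 1 then c else z $ Suc j - v $ Suc j * c)"
  have x: "x \<in> carrier_vec n" and x_low: "\<forall>i<m. x $ i = 0" and x_last: "x $ (n - 1) = c"
    using m_less_n by (auto simp: x_def)
  have "(B *\<^sub>v x) $ i = z $ i" if i: "i \<in> {p..<n}" for i
  proof -
    have Bx: "(B *\<^sub>v x) $ i = (if i \<in> S then 0 else x $ (i - 1)) + v $ i * c"
      using index_B_mult_vec[OF x] i x_last by simp
    consider "i < m" | "i = m" | "m < i"
      by linarith
    then show ?thesis
    proof cases
      case 1
      then show ?thesis
        using Bx x_low z_low v_below_m i by auto
    next
      case 2
      have "x $ (i - 1) = 0" if "i \<notin> S"
        using 2 that zero_in_starts x_low by (cases "i = 0") auto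
      then show ?thesis
        using Bx 2 v_m by (auto simp: c_def)
    next
      case 3
      then have "i \<notin> S"
        using start_le_last p_le_m by fastforce
      moreover have "i - 1 < n" "\<not> i - 1 < m" "i - 1 \<noteq> n - 1" "Suc (i - 1) = i"
        using 3 i by auto
      then have "x $ (i - 1) = z $ i - v $ i * c"
        by (simp add: x_def)
      ultimately show ?thesis
        using Bx by simp
    qed
  qed
  then show thesis
    using that x x_low unfolding tail_eq_def by blast
qed

lemma tail_surj_pow:
  assumes "z \<in> carrier_vec n" and "\<forall>i<m. z $ i = 0"
  obtains x where "x \<in> carrier_vec n" "tail_eq (B ^\<^sub>m k *\<^sub>v x) z"
proof -
  have "\<exists>x\<in>carrier_vec n. (\<forall>i<m. x $ i = 0) \<and> tail_eq (B ^\<^sub>m k *\<^sub>v x) z"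
    using assms
  proof (induction k arbitrary: z)
    case 0
    then show ?case
      using B_carrier by (intro bexI[of _ z]) (auto simp: tail_eq_def)
  next
    case (Suc k)
    obtain y where y: "y \<in> carrier_vec n" "\<forall>i<m. y $ i = 0" "tail_eq (B *\<^sub>v y) z"
      using tail_surj_B[OF Suc.prems] .
    obtain x where x: "x \<in> carrier_vec n" "\<forall>i<m. x $ i = 0" "tail_eq (B ^\<^sub>m k *\<^sub>v x) y"
      using Suc.IH[OF y(1,2)] by blast
    have "tail_eq (B *\<^sub>v (B ^\<^sub>m k *\<^sub>v x)) (B *\<^sub>v y)"
      using tail_eq_B_mult_vec[OF _ y(1) x(3)] B_carrier x(1) by simp
    then have "tail_eq (B ^\<^sub>m Suc k *\<^sub>v x) z"
      using y(3) pow_mat_Suc_mult_vec[OF B_carrier x(1)] unfolding tail_eq_def by auto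
    then show ?case
      using x by blast
  qed
  then show thesis
    using that by blast
qed

lemma not_nilpotent_B: "\<not> nilpotent_mat B"
proof
  assume "nilpotent_mat B"
  then obtain k where k: "\<forall>x\<in>carrier_vec n. B ^\<^sub>m k *\<^sub>v x = 0\<^sub>v n"
    using nilpotent_mat_iff_mult_vec[OF B_carrier] by blast
  obtain x where "x \<in> carrier_vec n" "tail_eq (B ^\<^sub>m k *\<^sub>v x) (unit_vec n m)"
    using tail_surj_pow[of "unit_vec n m" k] m_less_n by auto
  moreover have "m \<in> {p..<n}"
    using p_le_m m_less_n by simp
  ultimately show False
    using k m_less_n unfolding tail_eq_def by fastforce
qed

text \<open>\<open>B\<close> fixes a vector with the tail of \<open>unit_vec n (n - 1)\<close>, one in the range of \<open>B ^\<^sub>m N\<close>,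
  while \<open>B *\<^sub>v unit_vec n (n - 1) = v\<close>.\<close>
lemma tail_v_unit_if_pow_Suc_eq:
  assumes stable: "B ^\<^sub>m Suc N = B ^\<^sub>m N"
  shows "tail_eq v (unit_vec n (n - 1))"
proof -
  let ?e = "unit_vec n (n - 1) :: 'a vec"
  have "\<forall>i<m. ?e $ i = 0"
    using m_less_n by auto
  then obtain x where x: "x \<in> carrier_vec n" "tail_eq (B ^\<^sub>m N *\<^sub>v x) ?e"
    by (rule tail_surj_pow[OF unit_vec_carrier])
  have "B *\<^sub>v (B ^\<^sub>m N *\<^sub>v x) = B ^\<^sub>m N *\<^sub>v x"
    using pow_mat_Suc_mult_vec[OF B_carrier x(1), of N] stable by simp
  then have "tail_eq (B ^\<^sub>m N *\<^sub>v x) (B *\<^sub>v ?e)"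
    using tail_eq_B_mult_vec[OF _ _ x(2)] B_carrier x(1) by simp
  moreover have "B *\<^sub>v ?e = v"
  proof (rule eq_vecI)
    fix i assume "i < dim_vec v"
    then have i: "i < n"
      using v_carrier by simp
    have "?e $ (i - 1) = 0" if "i \<notin> S"
    proof -
      have "i \<noteq> 0"
        using that zero_in_starts by metis
      then show ?thesis
        using i by simp
    qed
    then show "(B *\<^sub>v ?e) $ i = v $ i"
      using index_B_mult_vec[OF unit_vec_carrier i] i p_less_n by (simp del: index_mult_mat_vec)
  qed (use B_carrier v_carrier in simp)
  ultimately show ?thesis
    using x(2) unfolding tail_eq_def by auto
qed

end

context
  assumes tail_v_unit: "tail_eq v (unit_vec n (n - 1))"
begin

text \<open>Now \<open>B\<close> acts on the tail as the companion matrix of \<open>x ^ (n - p - 1) (x - 1)\<close>, and the tail sum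
  is a left eigenvector for the eigenvalue \<open>1\<close>.\<close>
lemma tail_sum_B_mult_vec:
  assumes x: "x \<in> carrier_vec n"
  shows "tail_sum (B *\<^sub>v x) = tail_sum x"
proof -
  have v_tail: "v $ i = (if i = n - 1 then 1 else 0)" if "i \<in> {p..<n}" for i
    using tail_v_unit that unfolding tail_eq_def by auto
  have "tail_sum (B *\<^sub>v x) = (\<Sum>i\<in>{p..<n}. (if i \<in> S then 0 else x $ (i - 1)) + v $ i * x $ (n - 1))"
    unfolding tail_sum_def using x by (intro sum.cong) (simp_all add: index_B_mult_vec)
  also have "\<dots> = (\<Sum>i\<in>{Suc p..<n}. x $ (i - 1)) + x $ (n - 1)"
  proof -
    have "(\<Sum>i\<in>{p..<n}. if i \<in> S then 0 else x $ (i - 1))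
        = (\<Sum>i\<in>{Suc p..<n}. if i \<in> S then 0 else x $ (i - 1))"
      using p_less_n last_start_in by (subst sum.atLeast_Suc_lessThan) auto
    also have "\<dots> = (\<Sum>i\<in>{Suc p..<n}. x $ (i - 1))"
      using start_le_last by (intro sum.cong) fastforce+
    finally have "(\<Sum>i\<in>{p..<n}. if i \<in> S then 0 else x $ (i - 1)) = (\<Sum>i\<in>{Suc p..<n}. x $ (i - 1))" .
    moreover have "(\<Sum>i\<in>{p..<n}. v $ i * x $ (n - 1))
        = (\<Sum>i\<in>{p..<n}. if i = n - 1 then x $ (n - 1) else 0)"
      using v_tail by (intro sum.cong) auto
    moreover have "\<dots> = x $ (n - 1)"
      using p_less_n by (simp add: sum.delta)
    ultimately show ?thesis
      by (simp add: sum.distrib)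
  qed
  also have "\<dots> = (\<Sum>i\<in>{p..<n - 1}. x $ i) + x $ (n - 1)"
    using sum.shift_bounds_Suc_ivl[of "\<lambda>i. x $ (i - 1)" p "n - 1"] p_less_n by simp
  also have "\<dots> = tail_sum x"
    unfolding tail_sum_def using p_less_n sum.atLeastLessThan_Suc[of p "n - 1" "\<lambda>i. x $ i"] by simp
  finally show ?thesis .
qed

lemma tail_sum_pow_mult_vec:
  assumes x: "x \<in> carrier_vec n"
  shows "tail_sum (B ^\<^sub>m k *\<^sub>v x) = tail_sum x"
proof (induction k)
  case (Suc k)
  then show ?case
    using tail_sum_B_mult_vec[of "B ^\<^sub>m k *\<^sub>v x"] pow_mat_Suc_mult_vec[OF B_carrier x] B_carrier x
    by simp
qed (use x B_carrier in simp)

lemma pow_mult_vec_eq_zero_if_tail_sum_zero: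
  assumes y: "y \<in> carrier_vec n" and sum_zero: "tail_sum y = 0"
  shows "B ^\<^sub>m (n + (n - 1 - p)) *\<^sub>v y = 0\<^sub>v n"
proof -
  let ?z = "B ^\<^sub>m (n - 1 - p) *\<^sub>v y"
  have z: "?z \<in> carrier_vec n"
    using B_carrier y by simp
  have "\<forall>i\<in>{p..<n - 1}. v $ i = 0"
    using tail_v_unit unfolding tail_eq_def by auto
  then have z_low: "?z $ i = 0" if "i \<in> {p..<n - 1}" for i
    using index_pow_mult_vec_eq_zero[OF _ _ y, of "n - 1" i "n - 1 - p"] that by auto
  have "tail_sum ?z = ?z $ (n - 1)"
    unfolding tail_sum_def using p_less_n sum.atLeastLessThan_Suc[of p "n - 1" "\<lambda>i. ?z $ i"] z_low
    by simp
  then have "?z $ (n - 1) = 0"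
    using tail_sum_pow_mult_vec[OF y] sum_zero by simp
  then have "tail_eq ?z (0\<^sub>v n)"
    unfolding tail_eq_def
  proof (intro ballI)
    fix i assume "i \<in> {p..<n}"
    then show "?z $ i = 0\<^sub>v n $ i"
      using z_low \<open>?z $ (n - 1) = 0\<close> by (cases "i = n - 1") auto
  qed
  then show ?thesis
    using pow_mult_vec_eq_zero_if_tail_zero[OF z] pow_mat_add_mult_vec[OF B_carrier y] by simp
qed

lemma pow_Suc_eq_if_tail_v_unit: "B ^\<^sub>m Suc (n + (n - 1 - p)) = B ^\<^sub>m (n + (n - 1 - p))"
proof -
  let ?N = "n + (n - 1 - p)"
  have "B ^\<^sub>m Suc ?N *\<^sub>v x = B ^\<^sub>m ?N *\<^sub>v x" if x: "x \<in> carrier_vec n" for x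
  proof -
    have Bx: "B *\<^sub>v x \<in> carrier_vec n"
      using B_carrier x by simp
    have "tail_sum (B *\<^sub>v x - x) = 0"
      using tail_sum_B_mult_vec[OF x] Bx x by (simp add: tail_sum_def sum_subtractf)
    then have "B ^\<^sub>m ?N *\<^sub>v (B *\<^sub>v x - x) = 0\<^sub>v n"
      using pow_mult_vec_eq_zero_if_tail_sum_zero Bx x by simp
    then have "B ^\<^sub>m ?N *\<^sub>v (B *\<^sub>v x) - B ^\<^sub>m ?N *\<^sub>v x = 0\<^sub>v n"
      using mult_minus_distrib_mat_vec[OF pow_carrier_mat[OF B_carrier] Bx x] by simp
    then have "B ^\<^sub>m ?N *\<^sub>v (B *\<^sub>v x) = B ^\<^sub>m ?N *\<^sub>v x"
      by (rule eq_if_minus_vec_eq_zero[rotated 2]) (use B_carrier Bx x in simp_all)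
    then show ?thesis
      using assoc_mult_mat_vec[OF pow_carrier_mat[OF B_carrier] B_carrier x] by simp
  qed
  then show ?thesis
    using eq_mat_iff_mult_vec_eq[OF pow_carrier_mat[OF B_carrier] pow_carrier_mat[OF B_carrier]] by blast
qed

end

lemma nilpotent_B_iff: "nilpotent_mat B \<longleftrightarrow> tail_eq v (0\<^sub>v n)"
  using nilpotent_B_if_tail_v_zero not_nilpotent_B first_nonzero_tail_entry by metis

lemma semi_idempotent_not_nilpotent_B_iff:
  "semi_idempotent n B \<and> \<not> nilpotent_mat B \<longleftrightarrow> tail_eq v (unit_vec n (n - 1))"
proof
  assume "semi_idempotent n B \<and> \<not> nilpotent_mat B"
  moreover obtain m where "p \<le> m" "m < n" "v $ m \<noteq> 0" "\<forall>i\<in>{p..<m}. v $ i = 0"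
    using first_nonzero_tail_entry nilpotent_B_if_tail_v_zero calculation by blast
  ultimately show "tail_eq v (unit_vec n (n - 1))"
    using tail_v_unit_if_pow_Suc_eq semi_idempotent_iff_pow_Suc_eq[OF B_carrier] by blast
next
  assume unit: "tail_eq v (unit_vec n (n - 1))"
  then have "v $ (n - 1) = 1"
    using p_less_n unfolding tail_eq_def by auto
  moreover have "n - 1 \<in> {p..<n}"
    using p_less_n by auto
  ultimately have "\<not> tail_eq v (0\<^sub>v n)"
    unfolding tail_eq_def by fastforce
  then show "semi_idempotent n B \<and> \<not> nilpotent_mat B"
    using pow_Suc_eq_if_tail_v_unit[OF unit] semi_idempotent_iff_pow_Suc_eq[OF B_carrier] nilpotent_B_iff
    by blast
qed

lemma col_B:
  assumes j: "j < n"
  shows "col B j = (if j = n - 1 then v else if Suc j \<in> S then 0\<^sub>v n else unit_vec n (Suc j))"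
  using j v_carrier B_carrier by (intro eq_vecI) (auto simp: index_B)

lemma rank_B: "vec_space.rank n B = card ({..<n} - S) + (if \<forall>i\<in>S. v $ i = 0 then 0 else 1)"
proof -
  let ?I = "{..<n} - S"
  have cols: "set (cols B) = col B ` {..<n}"
    using B_carrier by (simp add: cols_def atLeast0LessThan)
  have "unit_vec n i \<in> set (cols B)" if "i \<in> ?I" for i
  proof -
    have "i \<noteq> 0"
      using that zero_in_starts by (metis DiffD2)
    then have "col B (i - 1) = unit_vec n i"
      using col_B[of "i - 1"] that by auto
    moreover have "i - 1 \<in> {..<n}"
      using that by auto
    ultimately show ?thesis
      unfolding cols by (metis image_eqI)
  qed
  then have units: "unit_vec n ` ?I \<subseteq> set (cols B)"
    by blast
  moreover have "v \<in> set (cols B)"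
  proof -
    have "col B (n - 1) = v" and "n - 1 \<in> {..<n}"
      using col_B[of "n - 1"] p_less_n by auto
    then show ?thesis
      unfolding cols by (metis image_eqI)
  qed
  moreover have "set (cols B) \<subseteq> insert (0\<^sub>v n) (insert v (unit_vec n ` ?I))"
    using col_B p_less_n unfolding cols by (auto split: if_splits)
  moreover have "(\<forall>i<n. i \<notin> ?I \<longrightarrow> v $ i = 0) \<longleftrightarrow> (\<forall>i\<in>S. v $ i = 0)"
    using starts_subset by auto
  ultimately show ?thesis
    using vec_space.rank_unit_vec_cols[OF B_carrier, of ?I] by simp
qed

end

context block_shift
begin

lemma block_shift_last_col: "v \<in> carrier_vec n \<Longrightarrow> block_shift_last_col n p S A v"
  by unfold_locales

lemma nilpotent_replace_last_col_iff:
  assumes "v \<in> carrier_vec n"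
  shows "nilpotent_mat (replace_last_col A v) \<longleftrightarrow> (\<forall>i\<in>{p..<n}. v $ i = 0)"
  using block_shift_last_col.nilpotent_B_iff[OF block_shift_last_col[OF assms]]
  by (simp add: block_shift_last_col.B_def[OF block_shift_last_col[OF assms]] tail_eq_def)

lemma semi_idempotent_not_nilpotent_replace_last_col_iff:
  assumes "v \<in> carrier_vec n"
  shows "semi_idempotent n (replace_last_col A v) \<and> \<not> nilpotent_mat (replace_last_col A v)
    \<longleftrightarrow> (\<forall>i\<in>{p..<n}. v $ i = (if i = n - 1 then 1 else 0))"
  using block_shift_last_col.semi_idempotent_not_nilpotent_B_iff[OF block_shift_last_col[OF assms]]
  by (simp add: block_shift_last_col.B_def[OF block_shift_last_col[OF assms]] tail_eq_def)

lemma rank_replace_last_col: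
  assumes "v \<in> carrier_vec n"
  shows "vec_space.rank n (replace_last_col A v)
    = card ({..<n} - S) + (if \<forall>i\<in>S. v $ i = 0 then 0 else 1)"
  using block_shift_last_col.rank_B[OF block_shift_last_col[OF assms]]
  by (simp add: block_shift_last_col.B_def[OF block_shift_last_col[OF assms]])

lemma rank_replace_last_col_eq_iff:
  assumes "v \<in> carrier_vec n"
  shows "vec_space.rank n (replace_last_col A v) = vec_space.rank n A \<longleftrightarrow> (\<forall>i\<in>S. v $ i = 0)"
  using rank_replace_last_col[OF assms] rank_replace_last_col[of "0\<^sub>v n"] replace_last_col_zero
    starts_subset by auto

lemma nilpotent_rank_eq_iff:
  assumes "v \<in> carrier_vec n"
  shows "nilpotent_mat (replace_last_col A v)
      \<and> vec_space.rank n (replace_last_col A v) = vec_space.rank n A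
    \<longleftrightarrow> (\<forall>i\<in>{p..<n} \<union> S. v $ i = 0)"
  using nilpotent_replace_last_col_iff[OF assms] rank_replace_last_col_eq_iff[OF assms] by auto

lemma semi_idempotent_rank_eq_iff:
  assumes "v \<in> carrier_vec n" and "p < n - 1"
  shows "semi_idempotent n (replace_last_col A v) \<and> \<not> nilpotent_mat (replace_last_col A v)
      \<and> vec_space.rank n (replace_last_col A v) = vec_space.rank n A
    \<longleftrightarrow> (\<forall>i\<in>{p..<n} \<union> S. v $ i = (if i = n - 1 then 1 else 0))"
proof -
  have "n - 1 \<notin> S"
    using assms(2) start_le_last by fastforce
  then have "(\<forall>i\<in>S. v $ i = (if i = n - 1 then 1 else 0)) \<longleftrightarrow> (\<forall>i\<in>S. v $ i = 0)"
    by (intro ball_cong) auto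
  then show ?thesis
    unfolding ball_Un
    using semi_idempotent_not_nilpotent_replace_last_col_iff[OF assms(1)]
      rank_replace_last_col_eq_iff[OF assms(1)] by blast
qed

lemma tail_subset: "{p..<n} \<subseteq> {..<n}"
  by auto

lemma card_tail_union_starts: "n - card ({p..<n} \<union> S) = p - (card S - 1)"
proof -
  have "{p..<n} \<union> S = {p..<n} \<union> (S - {p})"
    using last_start_in p_less_n by auto
  moreover have "{p..<n} \<inter> (S - {p}) = {}"
    using start_le_last by fastforce
  moreover have "finite S"
    using finite_subset[OF starts_subset] by simp
  ultimately have "card ({p..<n} \<union> S) = (n - p) + (card S - 1)"
    using last_start_in by (simp add: card_Un_disjoint)
  then show ?thesis
    using p_less_n by linarith
qed

lemma card_nilpotent_replace_last_col:
  "card {B \<in> replace_last_col A ` carrier_vec n. nilpotent_mat B} = card (UNIV :: 'a set) ^ p"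
  using card_replace_last_col_filter[OF A_carrier _ tail_subset nilpotent_replace_last_col_iff]
    p_less_n by simp

lemma card_semi_idempotent_replace_last_col:
  "card {B \<in> replace_last_col A ` carrier_vec n. semi_idempotent n B \<and> \<not> nilpotent_mat B}
    = card (UNIV :: 'a set) ^ p"
  using card_replace_last_col_filter[OF A_carrier _ tail_subset
      semi_idempotent_not_nilpotent_replace_last_col_iff] p_less_n by simp

lemma card_nilpotent_rank_eq:
  "card {B \<in> replace_last_col A ` carrier_vec n.
      nilpotent_mat B \<and> vec_space.rank n B = vec_space.rank n A}
    = card (UNIV :: 'a set) ^ (p - (card S - 1))"
  using card_replace_last_col_filter[OF A_carrier _ Un_least[OF tail_subset starts_subset]
      nilpotent_rank_eq_iff] p_less_n card_tail_union_starts by simp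

lemma card_semi_idempotent_rank_eq:
  assumes "p < n - 1"
  shows "card {B \<in> replace_last_col A ` carrier_vec n.
      semi_idempotent n B \<and> \<not> nilpotent_mat B \<and> vec_space.rank n B = vec_space.rank n A}
    = card (UNIV :: 'a set) ^ (p - (card S - 1))"
  using card_replace_last_col_filter[OF A_carrier _ Un_least[OF tail_subset starts_subset]
      semi_idempotent_rank_eq_iff[OF _ assms]] p_less_n card_tail_union_starts by simp

end

lemma block_shift_jordan_nilp_diag:
  assumes "rs \<noteq> []" and "\<forall>r\<in>set rs. 0 < r"
  shows "block_shift (sum_list rs) (sum_list rs - last rs) (block_starts rs)
    (jordan_nilp_diag rs :: 'a::field mat)"
proof (rule block_shift.intro)
  show "jordan_nilp_diag rs \<in> carrier_mat (sum_list rs) (sum_list rs)"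
    by (rule jordan_nilp_diag_carrier)
  show "(jordan_nilp_diag rs :: 'a mat) $$ (i, j) = (if i = Suc j \<and> i \<notin> block_starts rs then 1 else 0)"
    if "i < sum_list rs" and "j < sum_list rs" for i j
    using index_jordan_nilp_diag[OF assms(2) that] .
  show "block_starts rs \<subseteq> {..<sum_list rs}"
    using block_start_less_sum_list[OF assms(2)] by auto
  show "0 \<in> block_starts rs"
    using zero_in_block_starts[OF assms(1)] .
  show "sum_list rs - last rs \<in> block_starts rs"
    using last_block_start_in[OF assms(1)] .
  show "i \<le> sum_list rs - last rs" if "i \<in> block_starts rs" for i
    using block_start_le_last[OF that] .
qed

theorem lemma3p1:
  fixes rs :: "nat list" and n :: nat
  assumes "rs \<noteq> []" and "\<forall>r\<in>set rs. r > 0" and "n = sum_list rs"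
  defines "A \<equiv> (jordan_nilp_diag rs :: 'a::{finite,field} mat)"
  defines "M \<equiv> (\<lambda>v. replace_last_col A v) ` carrier_vec n"
  defines "q \<equiv> card (UNIV :: 'a set)"
  shows "(card {B\<in>M. nilpotent_mat B} = card {B\<in>M. semi_idempotent n B \<and> \<not> nilpotent_mat B}
       \<and> card {B\<in>M. nilpotent_mat B} = q ^ (n - last rs))
     \<and> (last rs > 1 \<longrightarrow>
       card {B\<in>M. nilpotent_mat B \<and> vec_space.rank n B = vec_space.rank n A}
         = card {B\<in>M. semi_idempotent n B \<and> \<not> nilpotent_mat B \<and> vec_space.rank n B = vec_space.rank n A}
       \<and> card {B\<in>M. nilpotent_mat B \<and> vec_space.rank n B = vec_space.rank n A}
         = q ^ (n - last rs - (length rs - 1)))"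
proof -
  define p where "p = n - last rs"
  interpret block_shift n p "block_starts rs" A
    unfolding p_def A_def assms(3) using assms(1,2) by (rule block_shift_jordan_nilp_diag)
  have "p - (card (block_starts rs) - 1) = n - last rs - (length rs - 1)"
    using card_block_starts[OF assms(2)] by (simp add: p_def)
  moreover have "p < n - 1" if "last rs > 1"
    using that member_le_sum_list[OF last_in_set[OF assms(1)]] by (simp add: p_def assms(3))
  ultimately show ?thesis
    unfolding M_def q_def
    using card_nilpotent_replace_last_col card_semi_idempotent_replace_last_col
      card_nilpotent_rank_eq card_semi_idempotent_rank_eq
    by (simp add: p_def)
qed

end
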